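(* Let $\mathbf x_1,\dots,\mathbf x_l\in\mathbb{R}^n$ and $y_1,\dots,y_l\in\{1,-1\}$; set $\bar{\mathbf x}_i=y_i\mathbf x_i$ and let $\overline{\mathbf X}\in\mathbb{R}^{l\times n}$ have $i$-th row $\bar{\mathbf x}_i^T$. For $C>0$ let $\mathbf w^*(C)$ be the optimal solution of the SVM problem $$\min_{\mathbf w}\tfrac12\|\mathbf w\|^2+C\sum_{i=1}^l\big[1-\mathbf w^T(y_i\mathbf x_i)\big]_+,$$ and $\theta^*(C)$ an optimal solution of its dual $\min_{\theta\in[0,1]^l}\frac C2\|\overline{\mathbf X}^T\theta\|^2-\sum_{i=1}^l\theta_i$. Let $0<C_1<\dots<C_{\mathcal K}$ and suppose $\mathbf w^*(C_k)$ is known for some integer $1\le k<\mathcal K$. If $$\tfrac{C_k+C_{k+1}}{2C_k}\langle\mathbf w^*(C_k),\bar{\mathbf x}_i\rangle-\tfrac{C_{k+1}-C_k}{2C_k}\|\mathbf w^*(C_k)\|\,\|\bar{\mathbf x}_i\|>1,$$ then $[\theta^*(C_{k+1})]_i=0$, i.e., $i\in\mathcal R$ (at $C=C_{k+1}$). Similarly, if $$\tfrac{C_k+C_{k+1}}{2C_k}\langle\mathbf w^*(C_k),\bar{\mathbf x}_i\rangle+\tfrac{C_{k+1}-C_k}{2C_k}\|\mathbf w^*(C_k)\|\,\|\bar{\mathbf x}_i\|<1,$$ then $[\theta^*(C_{k+1})]_i=1$, i.e., $i\in\mathcal L$.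
   Context: $[t]_+=\max\{t,0\}$. Primal and dual solutions satisfy $\mathbf w^*(C)=C\overline{\mathbf X}^T\theta^*(C)$. At parameter $C$: $\mathcal R=\{i:\langle\mathbf w^*(C),\bar{\mathbf x}_i\rangle>1\}$ and $\mathcal L=\{i:\langle\mathbf w^*(C),\bar{\mathbf x}_i\rangle<1\}$. *)

theory Defs
  imports "HOL-Analysis.Analysis"
begin

text \<open>Data: xb i = y_i x_i for i in {1..l}, vectors in R^n rendered as real^'n.\<close>

definition svm_primal :: "(nat \<Rightarrow> real^'n) \<Rightarrow> nat \<Rightarrow> real \<Rightarrow> real^'n \<Rightarrow> real" where
  "svm_primal xb l C w = (1/2) * (norm w)^2 + C * (\<Sum>i=1..l. max (1 - inner w (xb i)) 0)"

definition primal_opt :: "(nat \<Rightarrow> real^'n) \<Rightarrow> nat \<Rightarrow> real \<Rightarrow> real^'n \<Rightarrow> bool" where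
  "primal_opt xb l C w \<longleftrightarrow> (\<forall>v. svm_primal xb l C w \<le> svm_primal xb l C v)"

definition dual_feasible :: "nat \<Rightarrow> (nat \<Rightarrow> real) \<Rightarrow> bool" where
  "dual_feasible l \<theta> \<longleftrightarrow> (\<forall>i\<in>{1..l}. 0 \<le> \<theta> i \<and> \<theta> i \<le> 1)"

definition svm_dual :: "(nat \<Rightarrow> real^'n) \<Rightarrow> nat \<Rightarrow> real \<Rightarrow> (nat \<Rightarrow> real) \<Rightarrow> real" where
  "svm_dual xb l C \<theta> = (C/2) * (norm (\<Sum>i=1..l. \<theta> i *\<^sub>R xb i))^2 - (\<Sum>i=1..l. \<theta> i)"

definition dual_opt :: "(nat \<Rightarrow> real^'n) \<Rightarrow> nat \<Rightarrow> real \<Rightarrow> (nat \<Rightarrow> real) \<Rightarrow> bool" where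
  "dual_opt xb l C \<theta> \<longleftrightarrow> dual_feasible l \<theta> \<and>
     (\<forall>\<theta>'. dual_feasible l \<theta>' \<longrightarrow> svm_dual xb l C \<theta> \<le> svm_dual xb l C \<theta>')"

end

theory Submission
  imports Defs
begin

(*
  The primal objective is 1/2 |w|^2 + C h(w) with h the convex hinge loss, so its minimiser w
  satisfies the variational inequality 0 <= <w, u - w> + C (h u - h w) for all u. Writing it for
  w*(C) against w*(C') and vice versa, scaling by C' and C and adding eliminates h and places
  w*(C') in the ball of centre (C + C')/(2C) w*(C) and radius (C' - C)/(2C) |w*(C)|; by
  Cauchy-Schwarz the hypotheses then give <w*(C'), x_i> > 1 resp. < 1. On the dual side,
  C X^T theta is primal optimal for every dual optimum theta, and the coordinatewise optimality
  conditions of the box-constrained dual turn this margin into theta_i = 0 resp. theta_i = 1.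
*)

lemma nonneg_if_quadratic_nonneg_at_right:
  fixes a b d :: real
  assumes d: "0 < d" and nonneg: "\<And>t. 0 < t \<Longrightarrow> t \<le> d \<Longrightarrow> 0 \<le> t * a + t\<^sup>2 * b"
  shows "0 \<le> a"
proof (rule tendsto_lowerbound)
  show "((\<lambda>t. a + t * b) \<longlongrightarrow> a) (at_right 0)"
    by (auto intro!: tendsto_eq_intros)
  have "0 \<le> a + t * b" if t: "0 < t" "t \<le> d" for t
  proof -
    have "0 \<le> t * (a + t * b)"
      using nonneg[OF t] by (simp add: power2_eq_square algebra_simps)
    then show ?thesis using t by (simp add: zero_le_mult_iff)
  qed
  then show "\<forall>\<^sub>F t in at_right 0. 0 \<le> a + t * b"
    using d by (auto simp: eventually_at_right_field intro!: exI[of _ d])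
qed simp

lemma norm_add_scaleR_power2:
  fixes a d :: "'a::real_inner"
  shows "(norm (a + t *\<^sub>R d))\<^sup>2 = (norm a)\<^sup>2 + 2 * t * inner a d + t\<^sup>2 * (norm d)\<^sup>2"
  unfolding power2_norm_eq_inner
  by (simp add: inner_commute[of d a] power2_eq_square algebra_simps)

lemma variational_inequality_norm_power2_plus_convex:
  fixes g :: "'a::real_inner \<Rightarrow> real"
  assumes g: "convex_on UNIV g"
    and min: "\<And>v. (1/2) * (norm w)\<^sup>2 + g w \<le> (1/2) * (norm v)\<^sup>2 + g v"
  shows "0 \<le> inner w (u - w) + (g u - g w)"
proof (rule nonneg_if_quadratic_nonneg_at_right)
  fix t :: real
  assume t: "0 < t" "t \<le> 1"
  let ?v = "w + t *\<^sub>R (u - w)"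
  have "?v = (1 - t) *\<^sub>R w + t *\<^sub>R u"
    by (simp add: algebra_simps)
  then have "g ?v \<le> g w + t * (g u - g w)"
    using convex_onD[OF g, of t w u] t by (simp add: algebra_simps)
  then show "0 \<le> t * (inner w (u - w) + (g u - g w)) + t\<^sup>2 * ((1/2) * (norm (u - w))\<^sup>2)"
    using min[of ?v] norm_add_scaleR_power2[of w t "u - w"] by (simp add: algebra_simps)
qed simp

lemma regularization_path_ball:
  fixes h :: "'a::real_inner \<Rightarrow> real"
  assumes h: "convex_on UNIV h" and C: "0 < C" "C \<le> C'"
    and w: "\<And>v. (1/2) * (norm w)\<^sup>2 + C * h w \<le> (1/2) * (norm v)\<^sup>2 + C * h v"
    and w': "\<And>v. (1/2) * (norm w')\<^sup>2 + C' * h w' \<le> (1/2) * (norm v)\<^sup>2 + C' * h v"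
  shows "norm (w' - ((C + C') / (2 * C)) *\<^sub>R w) \<le> (C' - C) / (2 * C) * norm w"
proof -
  define c where "c = (C + C') / (2 * C)"
  define \<rho> where "\<rho> = (C' - C) / (2 * C)"
  have "convex_on UNIV (\<lambda>v. C * h v)" "convex_on UNIV (\<lambda>v. C' * h v)"
    using h C by (auto intro: convex_on_cmul)
  note vi = variational_inequality_norm_power2_plus_convex[OF this(1) w, of w']
    and vi' = variational_inequality_norm_power2_plus_convex[OF this(2) w', of w]
  have "0 \<le> C' * (inner w (w' - w) + (C * h w' - C * h w))
          + C * (inner w' (w - w') + (C' * h w - C' * h w'))"
    using mult_nonneg_nonneg[OF _ vi, of C'] mult_nonneg_nonneg[OF _ vi', of C] C by linarith
  \<comment> \<open>the hinge terms cancel\<close>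
  then have key: "C * (norm w')\<^sup>2 + C' * (norm w)\<^sup>2 \<le> (C + C') * inner w w'"
    by (simp add: power2_norm_eq_inner inner_diff_right inner_commute algebra_simps)
  have "C * ((norm (w' - c *\<^sub>R w))\<^sup>2 - (\<rho> * norm w)\<^sup>2)
          = C * (norm w')\<^sup>2 + C' * (norm w)\<^sup>2 - (C + C') * inner w w'"
    using norm_add_scaleR_power2[of w' "-c" w] C
    by (simp add: c_def \<rho>_def inner_commute field_simps power2_eq_square)
  with key have "C * ((norm (w' - c *\<^sub>R w))\<^sup>2 - (\<rho> * norm w)\<^sup>2) \<le> 0"
    by linarith
  with C have "(norm (w' - c *\<^sub>R w))\<^sup>2 \<le> (\<rho> * norm w)\<^sup>2"
    by (simp add: mult_le_0_iff)
  moreover have "0 \<le> \<rho> * norm w"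
    using C by (simp add: \<rho>_def)
  ultimately show ?thesis
    unfolding c_def \<rho>_def by (rule power2_le_imp_le)
qed

lemma inner_near_scaleR:
  fixes w w' x :: "'a::real_inner"
  assumes "norm (w' - c *\<^sub>R w) \<le> r"
  shows "\<bar>inner w' x - c * inner w x\<bar> \<le> r * norm x"
proof -
  have "\<bar>inner w' x - c * inner w x\<bar> = \<bar>inner (w' - c *\<^sub>R w) x\<bar>"
    by (simp add: inner_diff_left)
  also have "\<dots> \<le> norm (w' - c *\<^sub>R w) * norm x"
    by (rule Cauchy_Schwarz_ineq2)
  also have "\<dots> \<le> r * norm x"
    using assms by (rule mult_right_mono) simp
  finally show ?thesis .
qed

definition hinge_loss :: "(nat \<Rightarrow> real^'n) \<Rightarrow> nat \<Rightarrow> real^'n \<Rightarrow> real" where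
  "hinge_loss xb l w = (\<Sum>i=1..l. max (1 - inner w (xb i)) 0)"

lemma svm_primal_hinge_loss: "svm_primal xb l C w = (1/2) * (norm w)\<^sup>2 + C * hinge_loss xb l w"
  by (simp add: svm_primal_def hinge_loss_def)

lemma convex_hinge_loss:
  fixes xb :: "nat \<Rightarrow> real^'n"
  shows "convex_on UNIV (hinge_loss xb l)"
proof (rule convex_onI)
  fix t :: real and w u :: "real^'n"
  assume t: "0 < t" "t < 1"
  have "max (1 - ((1 - t) * a + t * b)) 0 \<le> (1 - t) * max (1 - a) 0 + t * max (1 - b) 0"
    for a b :: real
  proof -
    have "1 - ((1 - t) * a + t * b) = (1 - t) * (1 - a) + t * (1 - b)"
      by algebra
    moreover have "(1 - t) * (1 - a) \<le> (1 - t) * max (1 - a) 0" "t * (1 - b) \<le> t * max (1 - b) 0"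
      using t by (auto intro: mult_left_mono)
    moreover have "0 \<le> (1 - t) * max (1 - a) 0" "0 \<le> t * max (1 - b) 0"
      using t by auto
    ultimately show ?thesis
      by linarith
  qed
  then show "hinge_loss xb l ((1 - t) *\<^sub>R w + t *\<^sub>R u)
      \<le> (1 - t) * hinge_loss xb l w + t * hinge_loss xb l u"
    unfolding hinge_loss_def
    by (simp add: inner_add_left sum_distrib_left sum_mono flip: sum.distrib)
qed simp

lemma svm_path_inner_bound:
  assumes w: "primal_opt xb l C w" and w': "primal_opt xb l C' w'" and C: "0 < C" "C \<le> C'"
  shows "\<bar>inner w' x - (C + C') / (2 * C) * inner w x\<bar> \<le> (C' - C) / (2 * C) * norm w * norm x"
proof -
  have "norm (w' - ((C + C') / (2 * C)) *\<^sub>R w) \<le> (C' - C) / (2 * C) * norm w"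
    using w w' by (intro regularization_path_ball[OF convex_hinge_loss[of xb l] C])
      (simp_all add: primal_opt_def svm_primal_hinge_loss)
  then show ?thesis
    by (rule inner_near_scaleR)
qed

definition svm_primal_of_dual :: "(nat \<Rightarrow> real^'n) \<Rightarrow> nat \<Rightarrow> real \<Rightarrow> (nat \<Rightarrow> real) \<Rightarrow> real^'n" where
  "svm_primal_of_dual xb l C \<theta> = C *\<^sub>R (\<Sum>j=1..l. \<theta> j *\<^sub>R xb j)"

lemma svm_dual_coordinate_shift:
  assumes i: "i \<in> {1..l}"
  shows "svm_dual xb l C (\<lambda>j. \<theta> j + (if j = i then s else 0)) - svm_dual xb l C \<theta>
    = s * (inner (svm_primal_of_dual xb l C \<theta>) (xb i) - 1) + s\<^sup>2 * (C / 2 * (norm (xb i))\<^sup>2)"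
proof -
  let ?S = "\<Sum>j=1..l. \<theta> j *\<^sub>R xb j"
  have shift_sum: "(\<Sum>j=1..l. (\<theta> j + (if j = i then s else 0)) *\<^sub>R xb j) = ?S + s *\<^sub>R xb i"
    using i by (simp add: scaleR_add_left sum.distrib if_distrib[of "\<lambda>c. c *\<^sub>R _"] cong: if_cong)
  have shift_total: "(\<Sum>j=1..l. \<theta> j + (if j = i then s else 0)) = (\<Sum>j=1..l. \<theta> j) + s"
    using i by (simp add: sum.distrib)
  show ?thesis
    unfolding svm_dual_def svm_primal_of_dual_def shift_sum shift_total norm_add_scaleR_power2
    by (simp add: algebra_simps power2_eq_square)
qed

lemma dual_opt_complementary_slackness:
  assumes opt: "dual_opt xb l C \<theta>" and C: "0 < C" and i: "i \<in> {1..l}"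
  shows "1 < inner (svm_primal_of_dual xb l C \<theta>) (xb i) \<Longrightarrow> \<theta> i = 0"
    and "inner (svm_primal_of_dual xb l C \<theta>) (xb i) < 1 \<Longrightarrow> \<theta> i = 1"
proof -
  let ?m = "inner (svm_primal_of_dual xb l C \<theta>) (xb i)"
  let ?B = "C / 2 * (norm (xb i))\<^sup>2"
  have feas: "0 \<le> \<theta> i" "\<theta> i \<le> 1"
    using opt i by (auto simp: dual_opt_def dual_feasible_def)
  have shift: "0 \<le> s * (?m - 1) + s\<^sup>2 * ?B" if "0 \<le> \<theta> i + s" "\<theta> i + s \<le> 1" for s
  proof -
    have "dual_feasible l (\<lambda>j. \<theta> j + (if j = i then s else 0))"
      using opt that by (auto simp: dual_opt_def dual_feasible_def)
    with opt have "svm_dual xb l C \<theta> \<le> svm_dual xb l C (\<lambda>j. \<theta> j + (if j = i then s else 0))"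
      by (simp add: dual_opt_def)
    then show ?thesis
      using svm_dual_coordinate_shift[OF i, of xb C \<theta> s] by simp
  qed
  show "\<theta> i = 0" if "1 < ?m"
  proof (rule ccontr)
    assume "\<theta> i \<noteq> 0"
    with feas have pos: "0 < \<theta> i"
      by simp
    have "0 \<le> 1 - ?m"
    proof (rule nonneg_if_quadratic_nonneg_at_right[OF pos])
      fix t :: real
      assume "0 < t" "t \<le> \<theta> i"
      then show "0 \<le> t * (1 - ?m) + t\<^sup>2 * ?B"
        using shift[of "- t"] feas by (simp add: algebra_simps)
    qed
    with that show False
      by simp
  qed
  show "\<theta> i = 1" if "?m < 1"
  proof (rule ccontr)
    assume "\<theta> i \<noteq> 1"
    with feas have lt: "0 < 1 - \<theta> i"
      by simp
    have "0 \<le> ?m - 1"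
    proof (rule nonneg_if_quadratic_nonneg_at_right[OF lt])
      fix t :: real
      assume "0 < t" "t \<le> 1 - \<theta> i"
      then show "0 \<le> t * (?m - 1) + t\<^sup>2 * ?B"
        using shift[of t] feas by simp
    qed
    with that show False
      by simp
  qed
qed

lemma primal_opt_svm_primal_of_dual:
  assumes opt: "dual_opt xb l C \<theta>" and C: "0 < C"
  shows "primal_opt xb l C (svm_primal_of_dual xb l C \<theta>)"
proof -
  define w where "w = svm_primal_of_dual xb l C \<theta>"
  define L where "L v = (1/2) * (norm v)\<^sup>2 + C * (\<Sum>j=1..l. \<theta> j * (1 - inner v (xb j)))" for v
  have feas: "0 \<le> \<theta> j" "\<theta> j \<le> 1" if "j \<in> {1..l}" for j
    using opt that by (auto simp: dual_opt_def dual_feasible_def)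
  have "L v \<le> svm_primal xb l C v" for v
  proof -
    have "\<theta> j * (1 - inner v (xb j)) \<le> max (1 - inner v (xb j)) 0" if "j \<in> {1..l}" for j
      using feas[OF that] by (cases "inner v (xb j) \<le> 1") (auto intro: mult_left_le_one_le mult_nonneg_nonpos)
    then show ?thesis
      unfolding L_def svm_primal_def using C by (auto intro!: mult_left_mono sum_mono)
  qed
  moreover have "L w \<le> L v" for v
  proof -
    have L_alt: "L u = (1/2) * (norm u)\<^sup>2 - inner u w + C * (\<Sum>j=1..l. \<theta> j)" for u
      by (simp add: L_def w_def svm_primal_of_dual_def inner_sum_right sum_distrib_left
          right_diff_distrib sum_subtractf algebra_simps)
    have "0 \<le> inner (v - w) (v - w)"
      by simp
    then show ?thesis
      unfolding L_alt power2_norm_eq_inner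
      by (simp add: inner_diff_left inner_diff_right inner_commute algebra_simps)
  qed
  moreover have "svm_primal xb l C w = L w"
  proof -
    have "max (1 - inner w (xb j)) 0 = \<theta> j * (1 - inner w (xb j))" if j: "j \<in> {1..l}" for j
      using dual_opt_complementary_slackness[OF opt C j]
      by (cases "inner w (xb j)" "1 :: real" rule: linorder_cases) (auto simp: w_def)
    then show ?thesis
      unfolding svm_primal_def L_def by simp
  qed
  ultimately show ?thesis
    unfolding primal_opt_def w_def[symmetric] by (metis order_trans)
qed

lemma svm_screening_eq_0:
  assumes wk: "primal_opt xb l C wk" and C: "0 < C" "C \<le> C'" and i: "i \<in> {1..l}"
    and test: "(C + C') / (2 * C) * inner wk (xb i) - (C' - C) / (2 * C) * norm wk * norm (xb i) > 1"
  shows "(\<forall>\<theta>. dual_opt xb l C' \<theta> \<longrightarrow> \<theta> i = 0) \<and> (\<forall>w. primal_opt xb l C' w \<longrightarrow> inner w (xb i) > 1)"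
proof -
  have margin: "inner w (xb i) > 1" if "primal_opt xb l C' w" for w
    using svm_path_inner_bound[OF wk that C, of "xb i"] test by (simp add: abs_le_iff)
  have "0 < C'"
    using C by linarith
  then have "\<theta> i = 0" if "dual_opt xb l C' \<theta>" for \<theta>
    using that i margin primal_opt_svm_primal_of_dual by (blast intro: dual_opt_complementary_slackness(1))
  with margin show ?thesis
    by blast
qed

lemma svm_screening_eq_1:
  assumes wk: "primal_opt xb l C wk" and C: "0 < C" "C \<le> C'" and i: "i \<in> {1..l}"
    and test: "(C + C') / (2 * C) * inner wk (xb i) + (C' - C) / (2 * C) * norm wk * norm (xb i) < 1"
  shows "(\<forall>\<theta>. dual_opt xb l C' \<theta> \<longrightarrow> \<theta> i = 1) \<and> (\<forall>w. primal_opt xb l C' w \<longrightarrow> inner w (xb i) < 1)"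
proof -
  have margin: "inner w (xb i) < 1" if "primal_opt xb l C' w" for w
    using svm_path_inner_bound[OF wk that C, of "xb i"] test by (simp add: abs_le_iff)
  have "0 < C'"
    using C by linarith
  then have "\<theta> i = 1" if "dual_opt xb l C' \<theta>" for \<theta>
    using that i margin primal_opt_svm_primal_of_dual by (blast intro: dual_opt_complementary_slackness(2))
  with margin show ?thesis
    by blast
qed

theorem corollary4:
  fixes x :: "nat \<Rightarrow> real^'n" and y :: "nat \<Rightarrow> real" and l :: nat
    and Cs :: "nat \<Rightarrow> real" and K k :: nat and wk :: "real^'n" and i :: nat
  assumes y: "\<forall>j\<in>{1..l}. y j = 1 \<or> y j = -1"
    and Cpos: "0 < Cs 1"
    and Cinc: "\<forall>j\<in>{1..<K}. Cs j < Cs (Suc j)"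
    and k: "1 \<le> k" "k < K"
    and i: "i \<in> {1..l}"
    and wk: "primal_opt (\<lambda>j. y j *\<^sub>R x j) l (Cs k) wk"
  shows
    "(((Cs k + Cs (Suc k)) / (2 * Cs k)) * inner wk (y i *\<^sub>R x i)
        - ((Cs (Suc k) - Cs k) / (2 * Cs k)) * norm wk * norm (y i *\<^sub>R x i) > 1
      \<longrightarrow> (\<forall>\<theta>. dual_opt (\<lambda>j. y j *\<^sub>R x j) l (Cs (Suc k)) \<theta> \<longrightarrow> \<theta> i = 0)
        \<and> (\<forall>w. primal_opt (\<lambda>j. y j *\<^sub>R x j) l (Cs (Suc k)) w \<longrightarrow> inner w (y i *\<^sub>R x i) > 1))
     \<and> (((Cs k + Cs (Suc k)) / (2 * Cs k)) * inner wk (y i *\<^sub>R x i)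
        + ((Cs (Suc k) - Cs k) / (2 * Cs k)) * norm wk * norm (y i *\<^sub>R x i) < 1
      \<longrightarrow> (\<forall>\<theta>. dual_opt (\<lambda>j. y j *\<^sub>R x j) l (Cs (Suc k)) \<theta> \<longrightarrow> \<theta> i = 1)
        \<and> (\<forall>w. primal_opt (\<lambda>j. y j *\<^sub>R x j) l (Cs (Suc k)) w \<longrightarrow> inner w (y i *\<^sub>R x i) < 1))"
  proof -
  have "Cs 1 \<le> Cs k"
    using k(1)
  proof (induction k rule: dec_induct)
    case (step n)
    with Cinc k(2) show ?case
      by (metis atLeastLessThan_iff less_imp_le order_trans less_trans)
  qed simp
  moreover have "Cs k < Cs (Suc k)"
    using Cinc k by simp
  ultimately have C: "0 < Cs k" "Cs k \<le> Cs (Suc k)"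
    using Cpos by auto
  \<comment> \<open>the labels \<open>y\<close> enter only through \<open>y\<^sub>i x\<^sub>i\<close>\<close>
  show ?thesis
    using svm_screening_eq_0[OF wk C i] svm_screening_eq_1[OF wk C i] by blast
qed

end
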